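(* Let $d,T\ge 1$ be integers, let $c\ge 0$, and let $\boldsymbol\theta_0,\dots,\boldsymbol\theta_{T-1}\in\mathbb{R}^{d\times d}$ be orthogonal matrices. Define $\lambda_T=0$ and, for $t=T-1,\dots,0$, $\lambda_t=\frac{c(1+\lambda_{t+1})}{1+c+\lambda_{t+1}}$ (so $\lambda_{T-1}=\frac{c}{1+c}$), and set $\alpha_t=\frac{c}{1+\lambda_{t+1}+c}$ for $t=0,\dots,T-1$. Let $Z_0^{\parallel},\dots,Z_{T}^{\parallel}\subseteq\mathbb{R}^d$ be linear subspaces with $\boldsymbol\theta_t Z_t^{\parallel}=Z_{t+1}^{\parallel}$ for all $t$, let $\mathbf{P}_t$ be the orthogonal projection onto $Z_t^{\parallel}$, and define the feedback controls $\pi_t(\mathbf{x})=-(1-\alpha_t)(\mathbf{I}-\mathbf{P}_t)\mathbf{x}$. Let $\mathbf{x}_0\in Z_0^{\parallel}$ and let $\mathbf{x}_{t+1}=\boldsymbol\theta_t\mathbf{x}_t$ (unperturbed, uncontrolled trajectory). Let $\mathbf{z}=\mathbf{z}^{\parallel}+\mathbf{z}^{\perp}$ with $\mathbf{z}^{\parallel}\in Z_0^{\parallel}$ and $\mathbf{z}^{\perp}\in (Z_0^{\parallel})^{\perp}$, and define the perturbed controlled trajectory $\overline{\mathbf{x}}_0=\mathbf{x}_0+\mathbf{z}$, $\overline{\mathbf{x}}_{t+1}=\boldsymbol\theta_t(\overline{\mathbf{x}}_t+\pi_t(\overline{\mathbf{x}}_t))$. Then for every $1\le t\le T$, $$\lVert\overline{\mathbf{x}}_t-\mathbf{x}_t\rVert_2^2=\Big(\prod_{s=0}^{t-1}\alpha_s^2\Big)\lVert\mathbf{z}^{\perp}\rVert_2^2+\lVert\mathbf{z}^{\parallel}\rVert_2^2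 .$$
   Context: This models a $T$-layer network whose layer maps are linearized as orthogonal matrices $\boldsymbol\theta_t$, with a linear "embedding subspace" $Z_t^{\parallel}$ of the data at each layer (the unperturbed input lies in $Z_0^{\parallel}$). The control $\pi_t$ is the analytic optimal feedback control $\pi_t(\mathbf{x})=-\mathbf{V}_t\,\mathrm{diag}(0,\dots,0,1-\alpha_t,\dots,1-\alpha_t)\mathbf{V}_t^\top\mathbf{x}$, where $\mathbf{V}_t$ is an orthogonal matrix whose first columns span $Z_t^{\parallel}$ and whose remaining columns (those with entry $1-\alpha_t$) span its orthogonal complement; this equals $-(1-\alpha_t)(\mathbf{I}-\mathbf{P}_t)\mathbf{x}$. *)

theory Defs
  imports "HOL-Analysis.Analysis"
begin

definition orth_proj :: "'a::euclidean_space set \<Rightarrow> 'a \<Rightarrow> 'a" where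
  "orth_proj S x = (THE p. p \<in> S \<and> (\<forall>y\<in>S. orthogonal (x - p) y))"

fun lam_rev :: "real \<Rightarrow> nat \<Rightarrow> real" where
  "lam_rev c 0 = 0"
| "lam_rev c (Suc k) = c * (1 + lam_rev c k) / (1 + c + lam_rev c k)"

definition lam :: "nat \<Rightarrow> real \<Rightarrow> nat \<Rightarrow> real" where
  "lam T c t = lam_rev c (T - t)"

definition alpha :: "nat \<Rightarrow> real \<Rightarrow> nat \<Rightarrow> real" where
  "alpha T c t = c / (1 + lam T c (t + 1) + c)"

definition ctrl :: "nat \<Rightarrow> real \<Rightarrow> (nat \<Rightarrow> 'a::euclidean_space set) \<Rightarrow> nat \<Rightarrow> 'a \<Rightarrow> 'a" where
  "ctrl T c Z t x = - ((1 - alpha T c t) *\<^sub>R (x - orth_proj (Z t) x))"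

fun traj :: "(nat \<Rightarrow> real^'n^'n) \<Rightarrow> real^'n \<Rightarrow> nat \<Rightarrow> real^'n" where
  "traj \<theta> x0 0 = x0"
| "traj \<theta> x0 (Suc t) = \<theta> t *v traj \<theta> x0 t"

fun ctraj :: "nat \<Rightarrow> real \<Rightarrow> (nat \<Rightarrow> (real^'n) set) \<Rightarrow> (nat \<Rightarrow> real^'n^'n) \<Rightarrow> real^'n \<Rightarrow> nat \<Rightarrow> real^'n" where
  "ctraj T c Z \<theta> y0 0 = y0"
| "ctraj T c Z \<theta> y0 (Suc t) =
     \<theta> t *v (ctraj T c Z \<theta> y0 t + ctrl T c Z t (ctraj T c Z \<theta> y0 t))"

end

theory Submission
  imports Defs
begin

text \<open>The orthogonal matrices carry the embedding subspaces onto each other, hence also their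
  orthogonal complements. So if the perturbation starts as \<open>z\<^sup>\<parallel> + z\<^sup>\<perp>\<close>, the perturbed
  controlled state at time \<open>t\<close> is the unperturbed flow applied to \<open>x\<^sub>0 + z\<^sup>\<parallel>\<close> plus
  \<open>\<alpha>\<^sub>0\<cdots>\<alpha>\<^sub>t\<^sub>-\<^sub>1\<close> times the flow applied to \<open>z\<^sup>\<perp>\<close>: the control fixes the component in
  \<open>Z\<^sub>t\<close> and scales the complementary one by \<open>\<alpha>\<^sub>t\<close>. Pythagoras and norm preservation then
  give the squared deviation; the particular values of the \<open>\<alpha>\<^sub>t\<close> play no role.\<close>

lemma orth_proj_add_orthogonal_comp:
  assumes S: "subspace S" and p: "p \<in> S" and b: "b \<in> orthogonal_comp S"
  shows "orth_proj S (p + b) = p"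
  unfolding orth_proj_def
proof (rule the_equality)
  show "p \<in> S \<and> (\<forall>y\<in>S. orthogonal (p + b - p) y)"
    using p b by (auto simp: orthogonal_comp_def orthogonal_commute)
next
  fix q assume q: "q \<in> S \<and> (\<forall>y\<in>S. orthogonal (p + b - q) y)"
  have pq: "p - q \<in> S" using S p q by (simp add: subspace_diff)
  have "(p + b - q) \<bullet> (p - q) = 0" "b \<bullet> (p - q) = 0"
    using q b pq by (auto simp: orthogonal_comp_def orthogonal_def inner_commute)
  then have "(p - q) \<bullet> (p - q) = 0"
    by (simp add: inner_diff_left inner_add_left)
  then show "q = p" by simp
qed

lemma add_ctrl_orthogonal_decomp:
  assumes "subspace (Z t)" and "p \<in> Z t" and "b \<in> orthogonal_comp (Z t)"
  shows "(p + b) + ctrl T c Z t (p + b) = p + alpha T c t *\<^sub>R b"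
  using orth_proj_add_orthogonal_comp[OF assms]
  by (simp add: ctrl_def algebra_simps)

lemma orthogonal_transformation_matrix_vector_mult:
  fixes Q :: "real^'n^'n"
  assumes "orthogonal_matrix Q"
  shows "orthogonal_transformation (\<lambda>v. Q *v v)"
  using assms by (simp add: orthogonal_transformation_matrix)

lemma orthogonal_matrix_image_orthogonal_comp:
  fixes Q :: "real^'n^'n"
  assumes Q: "orthogonal_matrix Q" and img: "(\<lambda>v. Q *v v) ` S = S'"
    and b: "b \<in> orthogonal_comp S"
  shows "Q *v b \<in> orthogonal_comp S'"
  unfolding orthogonal_comp_def orthogonal_def
proof safe
  fix w assume "w \<in> S'"
  then obtain v where v: "v \<in> S" and w: "w = Q *v v" using img by auto
  have "w \<bullet> (Q *v b) = v \<bullet> b"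
    using orthogonal_transformation_matrix_vector_mult[OF Q] w
    by (simp add: orthogonal_transformation_def)
  also have "\<dots> = 0" using b v by (simp add: orthogonal_comp_def orthogonal_def)
  finally show "w \<bullet> (Q *v b) = 0" .
qed

lemma traj_add: "traj \<theta> (x + y) t = traj \<theta> x t + traj \<theta> y t"
  by (induction t) (simp_all add: matrix_vector_right_distrib)

lemma norm_traj:
  assumes "\<And>s. s < t \<Longrightarrow> orthogonal_matrix (\<theta> s)"
  shows "norm (traj \<theta> x t) = norm x"
  using assms
  by (induction t)
     (simp_all add: orthogonal_transformation_norm[OF orthogonal_transformation_matrix_vector_mult])

lemma traj_in_subspace:
  assumes "\<And>s. s < t \<Longrightarrow> (\<lambda>v. \<theta> s *v v) ` Z s = Z (Suc s)" and "x \<in> Z 0"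
  shows "traj \<theta> x t \<in> Z t"
  using assms by (induction t) (auto simp flip: less_Suc_eq)

lemma traj_in_orthogonal_comp:
  assumes "\<And>s. s < t \<Longrightarrow> orthogonal_matrix (\<theta> s)"
    and "\<And>s. s < t \<Longrightarrow> (\<lambda>v. \<theta> s *v v) ` Z s = Z (Suc s)"
    and "x \<in> orthogonal_comp (Z 0)"
  shows "traj \<theta> x t \<in> orthogonal_comp (Z t)"
  using assms
proof (induction t)
  case (Suc t)
  then have "traj \<theta> x t \<in> orthogonal_comp (Z t)" by simp
  then show ?case
    using Suc.prems orthogonal_matrix_image_orthogonal_comp[of "\<theta> t" "Z t" "Z (Suc t)"] by simp
qed simp

lemma ctraj_eq_traj:
  assumes "\<And>s. s < t \<Longrightarrow> orthogonal_matrix (\<theta> s)"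
    and "\<And>s. s < t \<Longrightarrow> subspace (Z s)"
    and "\<And>s. s < t \<Longrightarrow> (\<lambda>v. \<theta> s *v v) ` Z s = Z (Suc s)"
    and "x \<in> Z 0" and "z \<in> orthogonal_comp (Z 0)"
  shows "ctraj T c Z \<theta> (x + z) t = traj \<theta> x t + (\<Prod>s<t. alpha T c s) *\<^sub>R traj \<theta> z t"
  using assms
proof (induction t)
  case 0
  then show ?case by simp
next
  case (Suc t)
  let ?k = "\<Prod>s<t. alpha T c s"
  have "traj \<theta> x t \<in> Z t"
    using Suc.prems by (intro traj_in_subspace) auto
  moreover have "?k *\<^sub>R traj \<theta> z t \<in> orthogonal_comp (Z t)"
    using Suc.prems traj_in_orthogonal_comp[of t \<theta> Z z]
    by (auto intro: subspace_mul subspace_orthogonal_comp)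
  ultimately have "ctraj T c Z \<theta> (x + z) t + ctrl T c Z t (ctraj T c Z \<theta> (x + z) t)
      = traj \<theta> x t + alpha T c t *\<^sub>R ?k *\<^sub>R traj \<theta> z t"
    using Suc by (simp add: add_ctrl_orthogonal_decomp)
  then show ?case
    by (simp add: matrix_vector_right_distrib matrix_vector_mult_scaleR mult.commute)
qed

theorem theorem1:
  fixes T :: nat and c :: real
    and \<theta> :: "nat \<Rightarrow> real^'n^'n"
    and Z :: "nat \<Rightarrow> (real^'n) set"
    and x0 zpar zperp :: "real^'n"
  assumes "T \<ge> 1" and "c \<ge> 0"
    and "\<And>t. t < T \<Longrightarrow> orthogonal_matrix (\<theta> t)"
    and "\<And>t. t \<le> T \<Longrightarrow> subspace (Z t)"
    and "\<And>t. t < T \<Longrightarrow> (\<lambda>v. \<theta> t *v v) ` Z t = Z (Suc t)"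
    and "x0 \<in> Z 0"
    and "zpar \<in> Z 0" and "zperp \<in> orthogonal_comp (Z 0)"
  shows "\<forall>t. 1 \<le> t \<and> t \<le> T \<longrightarrow>
    (norm (ctraj T c Z \<theta> (x0 + (zpar + zperp)) t - traj \<theta> x0 t))\<^sup>2
      = (\<Prod>s<t. (alpha T c s)\<^sup>2) * (norm zperp)\<^sup>2 + (norm zpar)\<^sup>2"
proof (intro allI impI)
  fix t assume "1 \<le> t \<and> t \<le> T"
  then have orth: "\<And>s. s < t \<Longrightarrow> orthogonal_matrix (\<theta> s)"
    and sub: "\<And>s. s < t \<Longrightarrow> subspace (Z s)"
    and img: "\<And>s. s < t \<Longrightarrow> (\<lambda>v. \<theta> s *v v) ` Z s = Z (Suc s)"
    using assms(3-5) by auto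
  let ?k = "\<Prod>s<t. alpha T c s"
  have "ctraj T c Z \<theta> (x0 + (zpar + zperp)) t - traj \<theta> x0 t
      = traj \<theta> zpar t + ?k *\<^sub>R traj \<theta> zperp t"
    using ctraj_eq_traj[of t \<theta> Z "x0 + zpar" zperp T c, OF orth sub img] assms(6-8)
    by (simp add: add.assoc traj_add subspace_add assms(4))
  moreover have "orthogonal (traj \<theta> zpar t) (?k *\<^sub>R traj \<theta> zperp t)"
    using traj_in_subspace[OF img assms(7)] traj_in_orthogonal_comp[OF orth img assms(8)]
    by (simp add: orthogonal_comp_def orthogonal_clauses)
  ultimately show "(norm (ctraj T c Z \<theta> (x0 + (zpar + zperp)) t - traj \<theta> x0 t))\<^sup>2
      = (\<Prod>s<t. (alpha T c s)\<^sup>2) * (norm zperp)\<^sup>2 + (norm zpar)\<^sup>2"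
    by (simp add: norm_add_Pythagorean norm_traj[OF orth] power_mult_distrib prod_power_distrib)
qed

end
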